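(* An $L$-layer linear attention model with $H$ heads, dimension $d$ and precision $p$ cannot solve the function evaluation task $\mathsf{Eva}$ on $[n]$ whenever $LHd(d+1)p<n\log n$. On the other hand, a single-layer full attention Transformer solves $\mathsf{Eva}$ with $Hdp=O(\mathrm{poly}\log n)$. The same lower bound holds for linear attention with chain-of-thought.
   Context: Function evaluation $\mathsf{Eva}(f,x)$: the input is a function $f:[n]\to[n]$, given as $n$ tokens encoding $f(1),\dots,f(n)$, followed by one token encoding $x\in[n]$. The required output is $f(x)$. Linear attention layer: head $h$ outputs $y_i=\sum_{j\le i}\alpha_{i,j}Vx_j$ with $\alpha_{i,j}=\varphi(Qx_i)^\top\varphi(Kx_j)/\sum_{j'\le i}\varphi(Qx_i)^\top\varphi(Kx_{j'})$ for an arbitrary $\varphi:\mathbb{R}^d\to\mathbb{R}^d$. Here $Q,K,V\in\mathbb{R}^{d\times dH}$ have $p$-bit entries, the $H$ head outputs are concatenated, and each layer is followed by an arbitrary position-wise MLP map. Full attention is defined in the same way, with softmax weights $\alpha_{i,j}\propto\exp(\langle Qx_i,Kx_j\rangle)$. All quantities use $p$-bit precision. With chain-of-thought (CoT), the model, after reading the input, autoregressively generates additional tokens (each generated token is appended as a new input position), and the answer is read from the generated tokens. *)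

theory Defs
  imports Complex_Main
begin

type_synonym vec = "nat \<Rightarrow> real"   (* vectors; only indices < d are meaningful *)
type_synonym mat = "nat \<Rightarrow> nat \<Rightarrow> real"

definition prec_scheme :: "nat \<Rightarrow> real set \<Rightarrow> (real \<Rightarrow> real) \<Rightarrow> bool" where
  "prec_scheme p P rnd \<longleftrightarrow> finite P \<and> card P \<le> 2 ^ p \<and> (\<forall>x. rnd x \<in> P) \<and> (\<forall>x\<in>P. rnd x = x)"

text \<open>Concrete p-bit signed fixed point (p div 2 fractional bits), round-to-nearest with saturation.\<close>
definition fx_rnd :: "nat \<Rightarrow> real \<Rightarrow> real" where
  "fx_rnd p x = (let M = (2::int) ^ (p - 1) - 1; m = round (x * 2 ^ (p div 2))
                 in real_of_int (max (- M) (min M m)) / 2 ^ (p div 2))"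

definition fx_set :: "nat \<Rightarrow> real set" where
  "fx_set p = range (fx_rnd p)"

definition rvec :: "(real \<Rightarrow> real) \<Rightarrow> nat \<Rightarrow> vec \<Rightarrow> vec" where
  "rvec rnd d v = (\<lambda>k. if k < d then rnd (v k) else 0)"

definition mv :: "(real \<Rightarrow> real) \<Rightarrow> nat \<Rightarrow> mat \<Rightarrow> vec \<Rightarrow> vec" where
  "mv rnd d A v = rvec rnd d (\<lambda>a. \<Sum>b<d. A a b * v b)"

text \<open>Linear attention in recurrent form: S_j = sum of phi(K x) (V x)^T, z_j = sum of phi(K x),
each kept in p-bit precision.\<close>
fun lin_S :: "(real \<Rightarrow> real) \<Rightarrow> nat \<Rightarrow> (nat \<Rightarrow> vec) \<Rightarrow> (nat \<Rightarrow> vec) \<Rightarrow> nat \<Rightarrow> mat" where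
  "lin_S rnd d fk vv 0 = (\<lambda>a b. 0)"
| "lin_S rnd d fk vv (Suc j) = (\<lambda>a b. if a < d \<and> b < d
       then rnd (lin_S rnd d fk vv j a b + rnd (fk j a * vv j b)) else 0)"

fun lin_z :: "(real \<Rightarrow> real) \<Rightarrow> nat \<Rightarrow> (nat \<Rightarrow> vec) \<Rightarrow> nat \<Rightarrow> vec" where
  "lin_z rnd d fk 0 = (\<lambda>a. 0)"
| "lin_z rnd d fk (Suc j) = rvec rnd d (\<lambda>a. lin_z rnd d fk j a + fk j a)"

text \<open>Linear attention head: input representations X (position \<Rightarrow> vector), output at position i
(positions are 0-based, causal: j \<le> i).\<close>
definition lin_head :: "(real \<Rightarrow> real) \<Rightarrow> nat \<Rightarrow> mat \<Rightarrow> mat \<Rightarrow> mat \<Rightarrow> (vec \<Rightarrow> vec)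
                         \<Rightarrow> (nat \<Rightarrow> vec) \<Rightarrow> nat \<Rightarrow> vec" where
  "lin_head rnd d Q K V phi X i =
    (let fk = (\<lambda>j. rvec rnd d (phi (mv rnd d K (X j))));
         vv = (\<lambda>j. mv rnd d V (X j));
         fq = rvec rnd d (phi (mv rnd d Q (X i)));
         S = lin_S rnd d fk vv (Suc i);
         z = lin_z rnd d fk (Suc i);
         den = rnd (\<Sum>a<d. fq a * z a)
     in rvec rnd d (\<lambda>b. rnd (\<Sum>a<d. fq a * S a b) / den))"

definition sm_head :: "(real \<Rightarrow> real) \<Rightarrow> nat \<Rightarrow> mat \<Rightarrow> mat \<Rightarrow> mat
                        \<Rightarrow> (nat \<Rightarrow> vec) \<Rightarrow> nat \<Rightarrow> vec" where
  "sm_head rnd d Q K V X i =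
    (let q = mv rnd d Q (X i);
         s = (\<lambda>j. rnd (\<Sum>a<d. q a * mv rnd d K (X j) a));
         Zs = (\<Sum>j\<le>i. exp (s j));
         w = (\<lambda>j. rnd (exp (s j) / Zs))
     in rvec rnd d (\<lambda>b. \<Sum>j\<le>i. w j * mv rnd d V (X j) b))"

text \<open>One layer: H heads (hds h), outputs concatenated (dimension d*H), then an arbitrary
position-wise map F to dimension d.\<close>
definition tlayer :: "(real \<Rightarrow> real) \<Rightarrow> nat \<Rightarrow> nat \<Rightarrow> (nat \<Rightarrow> (nat \<Rightarrow> vec) \<Rightarrow> nat \<Rightarrow> vec)
                       \<Rightarrow> (vec \<Rightarrow> vec) \<Rightarrow> (nat \<Rightarrow> vec) \<Rightarrow> nat \<Rightarrow> vec" where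
  "tlayer rnd d H hds F X i =
     rvec rnd d (F (\<lambda>k. if k < d * H then hds (k div d) X i (k mod d) else 0))"

fun reps :: "(real \<Rightarrow> real) \<Rightarrow> nat \<Rightarrow> nat \<Rightarrow> (nat \<Rightarrow> nat \<Rightarrow> (nat \<Rightarrow> vec) \<Rightarrow> nat \<Rightarrow> vec)
              \<Rightarrow> (nat \<Rightarrow> vec \<Rightarrow> vec) \<Rightarrow> (nat \<Rightarrow> vec) \<Rightarrow> nat \<Rightarrow> (nat \<Rightarrow> vec)" where
  "reps rnd d H hds mlp X0 0 = X0"
| "reps rnd d H hds mlp X0 (Suc l) = tlayer rnd d H (hds l) (mlp l) (reps rnd d H hds mlp X0 l)"

definition embed :: "(real \<Rightarrow> real) \<Rightarrow> nat \<Rightarrow> (nat \<Rightarrow> nat \<Rightarrow> vec) \<Rightarrow> nat list \<Rightarrow> nat \<Rightarrow> vec" where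
  "embed rnd d emb xs = (\<lambda>i. rvec rnd d (emb i (xs ! i)))"

definition next_tok :: "(real \<Rightarrow> real) \<Rightarrow> nat \<Rightarrow> nat \<Rightarrow> nat
      \<Rightarrow> (nat \<Rightarrow> nat \<Rightarrow> (nat \<Rightarrow> vec) \<Rightarrow> nat \<Rightarrow> vec) \<Rightarrow> (nat \<Rightarrow> vec \<Rightarrow> vec)
      \<Rightarrow> (nat \<Rightarrow> nat \<Rightarrow> vec) \<Rightarrow> (vec \<Rightarrow> nat) \<Rightarrow> nat list \<Rightarrow> nat" where
  "next_tok rnd d L H hds mlp emb dec xs =
     dec (reps rnd d H hds mlp (embed rnd d emb xs) L (length xs - 1))"

definition lin_model :: "(real \<Rightarrow> real) \<Rightarrow> nat \<Rightarrow> nat \<Rightarrow> nat \<Rightarrow> (nat \<Rightarrow> nat \<Rightarrow> vec)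
      \<Rightarrow> (nat \<Rightarrow> nat \<Rightarrow> mat) \<Rightarrow> (nat \<Rightarrow> nat \<Rightarrow> mat) \<Rightarrow> (nat \<Rightarrow> nat \<Rightarrow> mat)
      \<Rightarrow> (nat \<Rightarrow> nat \<Rightarrow> vec \<Rightarrow> vec) \<Rightarrow> (nat \<Rightarrow> vec \<Rightarrow> vec) \<Rightarrow> (vec \<Rightarrow> nat) \<Rightarrow> nat list \<Rightarrow> nat" where
  "lin_model rnd d L H emb Q K V phi mlp dec =
     next_tok rnd d L H (\<lambda>l h. lin_head rnd d (Q l h) (K l h) (V l h) (phi l h)) mlp emb dec"

definition sm_model :: "(real \<Rightarrow> real) \<Rightarrow> nat \<Rightarrow> nat \<Rightarrow> nat \<Rightarrow> (nat \<Rightarrow> nat \<Rightarrow> vec)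
      \<Rightarrow> (nat \<Rightarrow> nat \<Rightarrow> mat) \<Rightarrow> (nat \<Rightarrow> nat \<Rightarrow> mat) \<Rightarrow> (nat \<Rightarrow> nat \<Rightarrow> mat)
      \<Rightarrow> (nat \<Rightarrow> vec \<Rightarrow> vec) \<Rightarrow> (vec \<Rightarrow> nat) \<Rightarrow> nat list \<Rightarrow> nat" where
  "sm_model rnd d L H emb Q K V mlp dec =
     next_tok rnd d L H (\<lambda>l h. sm_head rnd d (Q l h) (K l h) (V l h)) mlp emb dec"

definition weights_in :: "real set \<Rightarrow> nat \<Rightarrow> nat \<Rightarrow> nat \<Rightarrow> (nat \<Rightarrow> nat \<Rightarrow> mat) \<Rightarrow> bool" where
  "weights_in P L H d W \<longleftrightarrow> (\<forall>l<L. \<forall>h<H. \<forall>a<d. \<forall>b<d. W l h a b \<in> P)"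

fun cot_gen :: "(nat list \<Rightarrow> nat) \<Rightarrow> nat \<Rightarrow> nat list \<Rightarrow> nat list" where
  "cot_gen nt 0 xs = xs"
| "cot_gen nt (Suc t) xs = (let ys = cot_gen nt t xs in ys @ [nt ys])"

definition eva_input :: "nat \<Rightarrow> (nat \<Rightarrow> nat) \<Rightarrow> nat \<Rightarrow> nat list" where
  "eva_input n f x = map f [1..<Suc n] @ [x]"

definition is_fun_n :: "nat \<Rightarrow> (nat \<Rightarrow> nat) \<Rightarrow> bool" where
  "is_fun_n n f \<longleftrightarrow> (\<forall>i\<in>{1..n}. f i \<in> {1..n})"

definition solves_eva :: "nat \<Rightarrow> (nat list \<Rightarrow> nat) \<Rightarrow> bool" where
  "solves_eva n nt \<longleftrightarrow> (\<forall>f. is_fun_n n f \<longrightarrow> (\<forall>x\<in>{1..n}. nt (eva_input n f x) = f x))"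

definition solves_eva_cot :: "nat \<Rightarrow> (nat list \<Rightarrow> nat) \<Rightarrow> nat \<Rightarrow> (nat list \<Rightarrow> nat) \<Rightarrow> bool" where
  "solves_eva_cot n nt T ans \<longleftrightarrow> (\<forall>f. is_fun_n n f \<longrightarrow>
     (\<forall>x\<in>{1..n}. ans (drop (Suc n) (cot_gen nt T (eva_input n f x))) = f x))"

end

theory Submission
  imports Defs "HOL-Library.FuncSet" "HOL-Library.Discrete_Functions"
begin

(* A linear-attention layer reads the past only through the running sums of phi(K x) (V x)^T
   and of phi(K x). After the n tokens encoding f, the model therefore continues, with or
   without chain of thought, from a state of L H d (d + 1) numbers of p bits, i.e. from one of at
   most 2^(L H d (d + 1) p) states. The answers for the n queries x recover f, so these states
   must separate all n^n functions, which forces L H d (d + 1) p >= n log n. Only the rounding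
   of the activations enters this count.
   Softmax attention instead can select one position exactly: with a large inverse temperature,
   the query of x puts all its weight, after rounding, on the position holding f x. *)

definition summarises_prefix :: "(nat list \<Rightarrow> nat) \<Rightarrow> nat \<Rightarrow> (nat list \<Rightarrow> 's) \<Rightarrow> bool" where
  "summarises_prefix nt n \<sigma> \<longleftrightarrow> (\<forall>A B ys. length A = length B \<longrightarrow> n < length A \<longrightarrow>
     drop n A = drop n B \<longrightarrow> \<sigma> (take n A) = \<sigma> (take n B) \<longrightarrow> nt (A @ ys) = nt (B @ ys))"

lemma cot_gen_common_suffix:
  assumes "\<And>ys. nt (A @ ys) = nt (B @ ys)"
  shows "\<exists>ys. cot_gen nt t A = A @ ys \<and> cot_gen nt t B = B @ ys"
proof (induction t)
  case (Suc t)
  then obtain ys where "cot_gen nt t A = A @ ys" "cot_gen nt t B = B @ ys" by blast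
  then show ?case using assms[of ys] by (intro exI[of _ "ys @ [nt (A @ ys)]"]) (simp add: Let_def)
qed simp

lemma eva_input_simps:
  "length (eva_input n f x) = Suc n"
  "take n (eva_input n f x) = map f [1..<Suc n]"
  "drop n (eva_input n f x) = [x]"
  by (simp_all add: eva_input_def)

lemma inj_on_prefix_state_if_solves_eva_cot:
  assumes summary: "summarises_prefix nt n \<sigma>" and sol: "solves_eva_cot n nt T ans"
  shows "inj_on (\<lambda>f. \<sigma> (map f [1..<Suc n])) ({1..n} \<rightarrow>\<^sub>E {1..n})"
proof (rule inj_onI)
  fix f g assume f: "f \<in> {1..n} \<rightarrow>\<^sub>E {1..n}" and g: "g \<in> {1..n} \<rightarrow>\<^sub>E {1..n}"
    and eq: "\<sigma> (map f [1..<Suc n]) = \<sigma> (map g [1..<Suc n])"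
  show "f = g"
  proof (rule PiE_ext[OF f g])
    fix x assume x: "x \<in> {1..n}"
    have "nt (eva_input n f x @ ys) = nt (eva_input n g x @ ys)" for ys
      using summary eq unfolding summarises_prefix_def by (simp add: eva_input_simps)
    then obtain ys where ys: "cot_gen nt T (eva_input n f x) = eva_input n f x @ ys"
        "cot_gen nt T (eva_input n g x) = eva_input n g x @ ys"
      using cot_gen_common_suffix by blast
    have "is_fun_n n f" "is_fun_n n g" using f g by (auto simp: is_fun_n_def)
    then have "ans (drop (Suc n) (cot_gen nt T (eva_input n f x))) = f x"
      "ans (drop (Suc n) (cot_gen nt T (eva_input n g x))) = g x"
      using sol x unfolding solves_eva_cot_def by blast+
    then show "f x = g x" using ys by (simp add: eva_input_simps)
  qed
qed

lemma card_le_if_solves_eva_cot: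
  assumes "summarises_prefix nt n \<sigma>" and "solves_eva_cot n nt T ans"
    and "finite S" and "\<And>xs. length xs = n \<Longrightarrow> \<sigma> xs \<in> S"
  shows "n ^ n \<le> card S"
proof -
  from assms(1,2) have "inj_on (\<lambda>f. \<sigma> (map f [1..<Suc n])) ({1..n} \<rightarrow>\<^sub>E {1..n})"
    by (rule inj_on_prefix_state_if_solves_eva_cot)
  moreover have "(\<lambda>f. \<sigma> (map f [1..<Suc n])) ` ({1..n} \<rightarrow>\<^sub>E {1..n}) \<subseteq> S"
    using assms(4) by auto
  ultimately have "card ({1..n} \<rightarrow>\<^sub>E {1..n}) \<le> card S"
    using assms(3) by (rule card_inj_on_le)
  then show ?thesis by (simp add: card_PiE)
qed

lemma n_log_n_le_if_pow_le:
  fixes n b :: nat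
  assumes "n ^ n \<le> 2 ^ b"
  shows "real n * log 2 (real n) \<le> real b"
proof (cases "n = 0")
  case False
  have "real n * log 2 (real n) = log 2 (real (n ^ n))" by (simp add: log_nat_power)
  also have "\<dots> \<le> log 2 (real ((2::nat) ^ b))"
    using assms False by (subst log_le_cancel_iff) (auto simp del: of_nat_power)
  also have "\<dots> = real b" by (simp add: log_nat_power)
  finally show ?thesis .
qed simp

lemma lin_S_outside: "\<not> (a < d \<and> b < d) \<Longrightarrow> lin_S rnd d fk vv k a b = 0"
  by (induction k) auto

lemma lin_z_outside: "\<not> a < d \<Longrightarrow> lin_z rnd d fk k a = 0"
  by (induction k) (auto simp: rvec_def)

lemma lin_S_in:
  assumes "\<And>x. rnd x \<in> P" "0 < k" "a < d" "b < d"
  shows "lin_S rnd d fk vv k a b \<in> P"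
  using assms by (cases k) auto

lemma lin_z_in:
  assumes "\<And>x. rnd x \<in> P" "0 < k" "a < d"
  shows "lin_z rnd d fk k a \<in> P"
  using assms by (cases k) (auto simp: rvec_def)

lemma lin_S_eq_from:
  assumes "lin_S rnd d fk vv n = lin_S rnd d fk' vv' n"
    and "\<And>j. n \<le> j \<Longrightarrow> j < m \<Longrightarrow> fk j = fk' j \<and> vv j = vv' j" and "n \<le> k" "k \<le> m"
  shows "lin_S rnd d fk vv k = lin_S rnd d fk' vv' k"
  using assms(3,4)
proof (induction k)
  case (Suc k)
  show ?case
  proof (cases "n = Suc k")
    case False
    then have "n \<le> k" "k < m" using Suc.prems by auto
    then have "lin_S rnd d fk vv k = lin_S rnd d fk' vv' k" "fk k = fk' k" "vv k = vv' k"
      using Suc.IH assms(2)[of k] by auto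
    then show ?thesis unfolding lin_S.simps by (simp only:)
  qed (use assms(1) in simp)
qed (use assms(1) in simp)

lemma lin_z_eq_from:
  assumes "lin_z rnd d fk n = lin_z rnd d fk' n"
    and "\<And>j. n \<le> j \<Longrightarrow> j < m \<Longrightarrow> fk j = fk' j" and "n \<le> k" "k \<le> m"
  shows "lin_z rnd d fk k = lin_z rnd d fk' k"
  using assms(3,4)
proof (induction k)
  case (Suc k)
  show ?case
  proof (cases "n = Suc k")
    case False
    then have "lin_z rnd d fk k = lin_z rnd d fk' k" "fk k = fk' k"
      using Suc.prems Suc.IH assms(2)[of k] by auto
    then show ?thesis unfolding lin_z.simps by (simp only:)
  qed (use assms(1) in simp)
qed (use assms(1) in simp)

lemma tlayer_cong:
  assumes "\<And>h. h < H \<Longrightarrow> hds h X i = hds h Y i"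
  shows "tlayer rnd d H hds F X i = tlayer rnd d H hds F Y i"
proof -
  have "(if k < d * H then hds (k div d) X i (k mod d) else 0)
      = (if k < d * H then hds (k div d) Y i (k mod d) else 0)" for k
  proof (cases "k < d * H")
    case True
    then have "k div d < H" by (simp add: less_mult_imp_div_less mult.commute)
    then show ?thesis using assms True by simp
  qed simp
  then show ?thesis unfolding tlayer_def by simp
qed

locale lin_attn_model =
  fixes rnd :: "real \<Rightarrow> real" and d L H :: nat and emb :: "nat \<Rightarrow> nat \<Rightarrow> vec"
    and Q K V :: "nat \<Rightarrow> nat \<Rightarrow> mat" and phi :: "nat \<Rightarrow> nat \<Rightarrow> vec \<Rightarrow> vec"
    and mlp :: "nat \<Rightarrow> vec \<Rightarrow> vec" and dec :: "vec \<Rightarrow> nat"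
begin

definition heads :: "nat \<Rightarrow> nat \<Rightarrow> (nat \<Rightarrow> vec) \<Rightarrow> nat \<Rightarrow> vec" where
  "heads l h = lin_head rnd d (Q l h) (K l h) (V l h) (phi l h)"

definition hidden :: "(nat \<Rightarrow> vec) \<Rightarrow> nat \<Rightarrow> nat \<Rightarrow> vec" where
  "hidden X0 l = reps rnd d H heads mlp X0 l"

definition key_feats :: "nat \<Rightarrow> nat \<Rightarrow> (nat \<Rightarrow> vec) \<Rightarrow> nat \<Rightarrow> vec" where
  "key_feats l h X = (\<lambda>j. rvec rnd d (phi l h (mv rnd d (K l h) (X j))))"

definition val_vecs :: "nat \<Rightarrow> nat \<Rightarrow> (nat \<Rightarrow> vec) \<Rightarrow> nat \<Rightarrow> vec" where
  "val_vecs l h X = (\<lambda>j. mv rnd d (V l h) (X j))"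

definition kv_sum :: "(nat \<Rightarrow> vec) \<Rightarrow> nat \<Rightarrow> nat \<Rightarrow> nat \<Rightarrow> mat" where
  "kv_sum X0 l h k = lin_S rnd d (key_feats l h (hidden X0 l)) (val_vecs l h (hidden X0 l)) k"

definition key_sum :: "(nat \<Rightarrow> vec) \<Rightarrow> nat \<Rightarrow> nat \<Rightarrow> nat \<Rightarrow> vec" where
  "key_sum X0 l h k = lin_z rnd d (key_feats l h (hidden X0 l)) k"

definition sums_agree :: "(nat \<Rightarrow> vec) \<Rightarrow> (nat \<Rightarrow> vec) \<Rightarrow> nat \<Rightarrow> bool" where
  "sums_agree X0 Y0 k \<longleftrightarrow>
     (\<forall>l<L. \<forall>h<H. kv_sum X0 l h k = kv_sum Y0 l h k \<and> key_sum X0 l h k = key_sum Y0 l h k)"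

lemma heads_cong:
  assumes "kv_sum X0 l h (Suc i) = kv_sum Y0 l h (Suc i)"
    and "key_sum X0 l h (Suc i) = key_sum Y0 l h (Suc i)"
    and "hidden X0 l i = hidden Y0 l i"
  shows "heads l h (hidden X0 l) i = heads l h (hidden Y0 l) i"
  using assms unfolding heads_def lin_head_def Let_def kv_sum_def key_sum_def key_feats_def val_vecs_def
  by (simp only:)

lemma sums_eq_from:
  assumes "\<And>j. n \<le> j \<Longrightarrow> j < k \<Longrightarrow> hidden X0 l j = hidden Y0 l j"
    and "kv_sum X0 l h n = kv_sum Y0 l h n" "key_sum X0 l h n = key_sum Y0 l h n" and "n \<le> k"
  shows "kv_sum X0 l h k = kv_sum Y0 l h k \<and> key_sum X0 l h k = key_sum Y0 l h k"
proof
  show "kv_sum X0 l h k = kv_sum Y0 l h k"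
    using assms(2) unfolding kv_sum_def
    by (rule lin_S_eq_from[where m=k]) (simp_all add: assms(1,4) key_feats_def val_vecs_def)
  show "key_sum X0 l h k = key_sum Y0 l h k"
    using assms(3) unfolding key_sum_def
    by (rule lin_z_eq_from[where m=k]) (simp_all add: assms(1,4) key_feats_def)
qed

lemma hidden_eq_from:
  assumes "sums_agree X0 Y0 n" and "\<And>j. n \<le> j \<Longrightarrow> j < m \<Longrightarrow> X0 j = Y0 j"
  shows "l \<le> L \<Longrightarrow> n \<le> j \<Longrightarrow> j < m \<Longrightarrow> hidden X0 l j = hidden Y0 l j"
proof (induction l arbitrary: j)
  case 0
  then show ?case using assms(2) by (simp add: hidden_def)
next
  case (Suc l)
  have IH: "hidden X0 l i = hidden Y0 l i" if "n \<le> i" "i < m" for i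
    using Suc that by simp
  have "heads l h (hidden X0 l) j = heads l h (hidden Y0 l) j" if "h < H" for h
  proof -
    have "kv_sum X0 l h (Suc j) = kv_sum Y0 l h (Suc j) \<and> key_sum X0 l h (Suc j) = key_sum Y0 l h (Suc j)"
      using Suc.prems assms(1) that by (intro sums_eq_from[where n=n] IH) (auto simp: sums_agree_def)
    then show ?thesis using IH Suc.prems by (intro heads_cong) auto
  qed
  then have "tlayer rnd d H (heads l) (mlp l) (hidden X0 l) j = tlayer rnd d H (heads l) (mlp l) (hidden Y0 l) j"
    by (rule tlayer_cong[where hds="heads l" and X="hidden X0 l" and Y="hidden Y0 l"])
  then show ?case by (simp add: hidden_def)
qed

lemma sums_agree_from:
  assumes "sums_agree X0 Y0 n" and "\<And>j. n \<le> j \<Longrightarrow> j < m \<Longrightarrow> X0 j = Y0 j" and "n \<le> k" "k \<le> m"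
  shows "sums_agree X0 Y0 k"
  unfolding sums_agree_def
proof (intro allI impI)
  fix l h assume "l < L" "h < H"
  then show "kv_sum X0 l h k = kv_sum Y0 l h k \<and> key_sum X0 l h k = key_sum Y0 l h k"
    using assms hidden_eq_from[OF assms(1,2)] by (intro sums_eq_from) (auto simp: sums_agree_def)
qed

definition state_index :: "(nat \<times> nat \<times> nat \<times> nat) set" where
  "state_index = {..<L} \<times> {..<H} \<times> {..<d} \<times> {..<Suc d}"

text \<open>The vector \<open>z\<close> is stored as the extra column \<open>d\<close> of \<open>S\<close>.\<close>
definition state :: "nat \<Rightarrow> nat list \<Rightarrow> nat \<times> nat \<times> nat \<times> nat \<Rightarrow> real" where
  "state k xs = restrict (\<lambda>(l, h, a, b). if b < d then kv_sum (embed rnd d emb xs) l h k a b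
     else key_sum (embed rnd d emb xs) l h k a) state_index"

lemma finite_state_index: "finite state_index"
  by (simp add: state_index_def)

lemma card_state_index: "card state_index = L * H * d * (d + 1)"
  by (simp add: state_index_def card_cartesian_product algebra_simps)

lemma state_in_PiE:
  assumes "\<And>x. rnd x \<in> P" "0 < k"
  shows "state k xs \<in> state_index \<rightarrow>\<^sub>E P"
  using assms unfolding state_def restrict_PiE_iff
  by (auto simp: state_index_def kv_sum_def key_sum_def intro!: lin_S_in lin_z_in)

lemma state_eq_iff:
  "state k xs = state k ys \<longleftrightarrow> sums_agree (embed rnd d emb xs) (embed rnd d emb ys) k"
proof
  assume eq: "state k xs = state k ys"
  show "sums_agree (embed rnd d emb xs) (embed rnd d emb ys) k"
    unfolding sums_agree_def
  proof (intro allI impI conjI ext)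
    fix l h a b assume lh: "l < L" "h < H"
    show "kv_sum (embed rnd d emb xs) l h k a b = kv_sum (embed rnd d emb ys) l h k a b"
      using fun_cong[OF eq, of "(l, h, a, b)"] lin_S_outside lh
      by (cases "a < d \<and> b < d") (auto simp: state_def state_index_def kv_sum_def)
    show "key_sum (embed rnd d emb xs) l h k a = key_sum (embed rnd d emb ys) l h k a"
      using fun_cong[OF eq, of "(l, h, a, d)"] lin_z_outside lh
      by (cases "a < d") (auto simp: state_def state_index_def key_sum_def)
  qed
qed (auto simp: state_def state_index_def sums_agree_def intro!: restrict_ext)

lemma state_take: "state k (take k xs) = state k xs"
proof (cases "k \<le> length xs")
  case True
  have "sums_agree (embed rnd d emb (take k xs)) (embed rnd d emb xs) 0"
    by (simp add: sums_agree_def kv_sum_def key_sum_def)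
  then have "sums_agree (embed rnd d emb (take k xs)) (embed rnd d emb xs) k"
    by (rule sums_agree_from[where m=k]) (use True in \<open>auto simp: embed_def\<close>)
  then show ?thesis by (simp add: state_eq_iff)
qed simp

lemma lin_model_eq:
  "lin_model rnd d L H emb Q K V phi mlp dec xs = dec (hidden (embed rnd d emb xs) L (length xs - 1))"
  unfolding lin_model_def next_tok_def hidden_def heads_def ..

lemma lin_model_append_cong:
  assumes "length A = length B" "n < length A" "drop n A = drop n B" "state n A = state n B"
  shows "lin_model rnd d L H emb Q K V phi mlp dec (A @ ys) = lin_model rnd d L H emb Q K V phi mlp dec (B @ ys)"
proof -
  have "state n (A @ ys) = state n (B @ ys)"
    using assms state_take[of n "A @ ys"] state_take[of n "B @ ys"] state_take[of n A] state_take[of n B]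
    by simp
  then have "sums_agree (embed rnd d emb (A @ ys)) (embed rnd d emb (B @ ys)) n"
    by (simp add: state_eq_iff)
  moreover have "embed rnd d emb (A @ ys) j = embed rnd d emb (B @ ys) j"
    if "n \<le> j" "j < length (A @ ys)" for j
  proof -
    have "(A @ ys) ! j = drop n (A @ ys) ! (j - n)" using that assms(2) by (simp del: drop_append)
    also have "\<dots> = drop n (B @ ys) ! (j - n)" using assms(1,2,3) by simp
    also have "\<dots> = (B @ ys) ! j" using that assms(1,2) by (simp del: drop_append)
    finally show ?thesis by (simp add: embed_def)
  qed
  ultimately have "hidden (embed rnd d emb (A @ ys)) L (length (A @ ys) - 1)
      = hidden (embed rnd d emb (B @ ys)) L (length (A @ ys) - 1)"
    by (rule hidden_eq_from) (use assms(2) in auto)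
  then show ?thesis unfolding lin_model_eq using assms(1) by simp
qed

lemma summarises_prefix_state: "summarises_prefix (lin_model rnd d L H emb Q K V phi mlp dec) n (state n)"
  unfolding summarises_prefix_def state_take by (blast intro: lin_model_append_cong)

lemma not_solves_eva_cot:
  assumes "prec_scheme p P rnd" and "real (L * H * d * (d + 1) * p) < real n * log 2 (real n)"
  shows "\<not> solves_eva_cot n (lin_model rnd d L H emb Q K V phi mlp dec) T ans"
proof
  assume sol: "solves_eva_cot n (lin_model rnd d L H emb Q K V phi mlp dec) T ans"
  have "n \<noteq> 0"
  proof
    assume "n = 0"
    then have "real n * log 2 (real n) = 0" by simp
    then show False using assms(2) of_nat_0_le_iff[of "L * H * d * (d + 1) * p"] by linarith
  qed
  have "n ^ n \<le> card (state_index \<rightarrow>\<^sub>E P)"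
  proof (rule card_le_if_solves_eva_cot[OF summarises_prefix_state sol])
    show "finite (state_index \<rightarrow>\<^sub>E P)"
      using assms(1) by (simp add: prec_scheme_def finite_state_index finite_PiE)
    show "\<And>xs. length xs = n \<Longrightarrow> state n xs \<in> state_index \<rightarrow>\<^sub>E P"
      using assms(1) \<open>n \<noteq> 0\<close> by (intro state_in_PiE) (auto simp: prec_scheme_def)
  qed
  also have "\<dots> = card P ^ (L * H * d * (d + 1))"
    by (simp add: card_PiE finite_state_index card_state_index)
  also have "\<dots> \<le> (2 ^ p) ^ (L * H * d * (d + 1))"
    using assms(1) by (intro power_mono) (auto simp: prec_scheme_def)
  also have "\<dots> = 2 ^ (L * H * d * (d + 1) * p)"
    by (simp add: power_mult[symmetric] mult.commute)
  finally have "real n * log 2 (real n) \<le> real (L * H * d * (d + 1) * p)"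
    by (rule n_log_n_le_if_pow_le)
  then show False using assms(2) by linarith
qed

end

lemma fx_rnd_eq_of_int:
  assumes r: "2 \<le> r" and v: "\<bar>v\<bar> \<le> 2 ^ (r - 1) - 1"
    and y: "\<bar>y - of_int v\<bar> < 1 / 2 ^ (r + 1)"
  shows "fx_rnd (2 * r) y = of_int v"
proof -
  have "\<bar>y * 2 ^ r - of_int (v * 2 ^ r)\<bar> = \<bar>y - of_int v\<bar> * 2 ^ r"
    by (simp add: abs_mult left_diff_distrib[symmetric])
  also have "\<dots> < 1 / 2 ^ (r + 1) * 2 ^ r"
    using y by (intro mult_strict_right_mono) auto
  also have "\<dots> = 1 / 2" by simp
  finally have rounded: "round (y * 2 ^ r) = v * 2 ^ r" by (intro round_unique') simp
  obtain r' where r': "r = Suc r'" using r by (cases r) auto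
  have "\<bar>v * 2 ^ r\<bar> \<le> (2 ^ (r - 1) - 1) * 2 ^ r"
    using v by (simp add: abs_mult mult_right_mono)
  also have "\<dots> = 2 ^ (2 * r - 1) - 2 ^ r"
    by (simp add: r' algebra_simps power_add[symmetric])
  finally have "\<bar>v * 2 ^ r\<bar> \<le> 2 ^ (2 * r - 1) - 1" using one_le_power[of "2::int" r] by linarith
  then have "max (- (2 ^ (2 * r - 1) - 1)) (min (2 ^ (2 * r - 1) - 1) (v * 2 ^ r)) = v * 2 ^ r"
    by (simp add: abs_le_iff)
  then show ?thesis unfolding fx_rnd_def Let_def by (simp add: rounded)
qed

lemma softmax_concentrates:
  fixes s :: "'a \<Rightarrow> real"
  assumes "finite J" "t \<in> J" "s t = 0" "\<And>j. j \<in> J \<Longrightarrow> j \<noteq> t \<Longrightarrow> s j \<le> - \<beta>"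
    and "real (card J) * exp (- \<beta>) < \<epsilon>"
  shows "\<bar>exp (s t) / (\<Sum>i\<in>J. exp (s i)) - 1\<bar> < \<epsilon>"
    and "\<And>j. j \<in> J \<Longrightarrow> j \<noteq> t \<Longrightarrow> exp (s j) / (\<Sum>i\<in>J. exp (s i)) < \<epsilon>"
proof -
  define R where "R = (\<Sum>i\<in>J - {t}. exp (s i))"
  have Z: "(\<Sum>i\<in>J. exp (s i)) = 1 + R"
    unfolding R_def using assms(1-3) by (simp add: sum.remove)
  have "R \<le> real (card (J - {t})) * exp (- \<beta>)"
    unfolding R_def by (rule sum_bounded_above) (use assms(4) in auto)
  also have "\<dots> \<le> real (card J) * exp (- \<beta>)"
    using assms(1) by (intro mult_right_mono) (auto intro: card_mono)
  finally have R_lt: "R < \<epsilon>" using assms(5) by simp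
  have R_ge: "0 \<le> R" unfolding R_def by (intro sum_nonneg) simp
  have "\<bar>1 / (1 + R) - 1\<bar> = R / (1 + R)" using R_ge by (simp add: field_simps)
  also have "\<dots> \<le> R" using R_ge by (simp add: field_simps)
  finally show "\<bar>exp (s t) / (\<Sum>i\<in>J. exp (s i)) - 1\<bar> < \<epsilon>" using R_lt Z assms(3) by simp
  fix j assume "j \<in> J" "j \<noteq> t"
  have "exp (s j) / (1 + R) \<le> exp (s j)" using R_ge by (simp add: field_simps)
  also have "\<dots> \<le> exp (- \<beta>)" using assms(4) \<open>j \<in> J\<close> \<open>j \<noteq> t\<close> by simp
  also have "\<dots> \<le> real (card J) * exp (- \<beta>)"
    using assms(1) \<open>j \<in> J\<close> by (cases "J = {}") (auto simp: Suc_le_eq card_gt_0_iff)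
  finally show "exp (s j) / (\<Sum>i\<in>J. exp (s i)) < \<epsilon>" using assms(5) Z by simp
qed

definition sel_mat :: "(nat \<Rightarrow> bool) \<Rightarrow> (nat \<Rightarrow> nat) \<Rightarrow> mat" where
  "sel_mat P \<sigma> a b = (if P a \<and> b = \<sigma> a then 1 else 0)"

lemma mv_sel_mat:
  assumes "\<forall>a. P a \<longrightarrow> \<sigma> a < d"
  shows "mv rnd d (sel_mat P \<sigma>) Y a = (if a < d then rnd (if P a then Y (\<sigma> a) else 0) else 0)"
proof -
  have "(\<Sum>b<d. sel_mat P \<sigma> a b * Y b) = (if P a then Y (\<sigma> a) else 0)"
    using assms by (simp add: sel_mat_def if_distrib[of "\<lambda>c. c * _"] sum.delta' cong: if_cong)
  then show ?thesis by (simp add: mv_def rvec_def)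
qed

lemma sel_mat_weights_in:
  assumes "0 \<in> P" "1 \<in> P"
  shows "weights_in P L H d (\<lambda>l h. sel_mat Pr \<sigma>)"
  using assms by (simp add: weights_in_def sel_mat_def)

text \<open>The token \<open>t\<close> at position \<open>i\<close> is embedded as \<open>(2\<beta>t, -\<beta>, -\<beta>t\<^sup>2, i+1, (i+1)\<^sup>2, 1, t)\<close>; the query of the last token \<open>x\<close> is
  \<open>(2\<beta>x, -\<beta>, -\<beta>x\<^sup>2)\<close> and the key at position \<open>j\<close> is \<open>(j+1, (j+1)\<^sup>2, 1)\<close>, giving the score
  \<open>-\<beta>(x-j-1)\<^sup>2\<close>. It vanishes at the position \<open>x-1\<close> holding \<open>f x\<close> and is at most \<open>-\<beta>\<close>
  elsewhere, so for large \<open>\<beta>\<close> the rounded softmax weights are exactly the indicator of that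
  position and the head copies \<open>f x\<close>. All quantities are integers of size \<open>O(\<beta> n\<^sup>2)\<close>, so
  \<open>O(log n)\<close> bits suffice.\<close>

locale eva_softmax_construction =
  fixes n s :: nat
  assumes n_lt_pow: "n + 1 \<le> 2 ^ s"
begin

definition frac_bits :: nat where "frac_bits = 4 * s + 8"

definition beta :: nat where "beta = 2 * frac_bits + 2"

definition rd :: "real \<Rightarrow> real" where "rd = fx_rnd (2 * frac_bits)"

definition tok_emb :: "nat \<Rightarrow> nat \<Rightarrow> vec" where
  "tok_emb i t k = (if k < 7 then of_int ([int beta * (2 * int t), - int beta, - (int beta * int t ^ 2),
      int i + 1, (int i + 1) ^ 2, 1, int t] ! k) else 0)"

definition score :: "nat \<Rightarrow> nat \<Rightarrow> real" where
  "score x j = of_int (- int beta * (int x - int j - 1) ^ 2)"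

definition WQ :: mat where "WQ = sel_mat (\<lambda>a. a < 3) id"
definition WK :: mat where "WK = sel_mat (\<lambda>a. a < 3) (\<lambda>a. a + 3)"
definition WV :: mat where "WV = sel_mat (\<lambda>a. a = 0) (\<lambda>_. 6)"

lemma scale_le_fx_max: "int beta * (int n + 1) ^ 2 \<le> 2 ^ (frac_bits - 1) - 1"
proof -
  have lin_exp: "8 * k + 18 < 32 * (2::nat) ^ k" for k by (induction k) auto
  have "beta = 8 * s + 18" by (simp add: beta_def frac_bits_def)
  moreover have "(n + 1) ^ 2 \<le> (2 ^ s) ^ 2" using n_lt_pow by (rule power_mono) simp
  ultimately have "beta * (n + 1) ^ 2 \<le> (8 * s + 18) * (2 ^ s) ^ 2" by simp
  also have "\<dots> < 32 * 2 ^ s * (2 ^ s) ^ 2"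
    using lin_exp[of s] by (intro mult_strict_right_mono) auto
  also have "\<dots> = 2 ^ (3 * s + 5)"
    by (simp add: power_add power_mult mult.commute power2_eq_square power3_eq_cube)
  also have "\<dots> \<le> 2 ^ (frac_bits - 1)" unfolding frac_bits_def by (intro power_increasing) auto
  finally have "int (beta * (n + 1) ^ 2) < int (2 ^ (frac_bits - 1))" by (simp only: of_nat_less_iff)
  then show ?thesis by (simp add: add.commute)
qed

lemma rd_eq_of_int:
  assumes "\<bar>v\<bar> \<le> int beta * (int n + 1) ^ 2" "\<bar>y - of_int v\<bar> < 1 / 2 ^ (frac_bits + 1)"
  shows "rd y = of_int v"
  unfolding rd_def using assms scale_le_fx_max
  by (intro fx_rnd_eq_of_int) (auto simp: frac_bits_def)

lemma rd_of_int: "\<bar>v\<bar> \<le> int beta * (int n + 1) ^ 2 \<Longrightarrow> rd (of_int v) = of_int v"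
  by (rule rd_eq_of_int) simp_all

lemma le_scale:
  assumes "u \<le> (int n + 1) ^ 2"
  shows "u \<le> int beta * (int n + 1) ^ 2"
proof -
  have beta_ge_1: "1 \<le> int beta" by (simp add: beta_def)
  have "(int n + 1) ^ 2 \<le> int beta * (int n + 1) ^ 2"
    using mult_right_mono[OF beta_ge_1, of "(int n + 1) ^ 2"] by simp
  then show ?thesis using assms by linarith
qed

lemma rd_0: "rd 0 = 0"
  using rd_of_int[of 0] by simp

lemma rd_1: "rd 1 = 1"
proof -
  have "\<bar>1::int\<bar> \<le> int beta * (int n + 1) ^ 2" by (intro le_scale) (simp add: one_le_power)
  then show ?thesis using rd_of_int[of 1] by simp
qed

lemma rd_of_nat:
  assumes "t \<le> n"
  shows "rd (real t) = real t"
proof -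
  have "int n + 1 \<le> (int n + 1) ^ 2" by (simp add: power2_eq_square)
  then have "\<bar>int t\<bar> \<le> int beta * (int n + 1) ^ 2" using assms by (intro le_scale) simp
  then show ?thesis using rd_of_int[of "int t"] by simp
qed

lemma card_exp_neg_beta_lt: "real (card {..n}) * exp (- real beta) < 1 / 2 ^ (frac_bits + 1)"
proof -
  have "(2::nat) ^ s \<le> 2 ^ frac_bits" by (rule power_increasing) (simp_all add: frac_bits_def)
  then have "n + 1 \<le> (2::nat) ^ frac_bits" using n_lt_pow by linarith
  then have "real (card {..n}) \<le> 2 ^ frac_bits"
    using of_nat_le_iff[of "n + 1" "2 ^ frac_bits", where 'a=real] by simp
  then have "real (card {..n}) * 2 ^ (frac_bits + 1) \<le> 2 ^ frac_bits * 2 ^ (frac_bits + 1)"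
    by (intro mult_right_mono) simp_all
  also have "\<dots> = 2 ^ (2 * frac_bits + 1)" by (simp add: power_add[symmetric])
  also have "\<dots> < 2 ^ beta" by (simp add: beta_def)
  also have "\<dots> \<le> exp 1 ^ beta" using exp_ge_add_one_self[of 1] by (intro power_mono) simp_all
  also have "\<dots> = exp (real beta)" by (simp add: exp_of_nat_mult[symmetric])
  finally show ?thesis by (simp add: exp_minus field_simps)
qed

lemma rd_tok_emb:
  assumes "i \<le> n" "t \<le> n"
  shows "rd (tok_emb i t k) = tok_emb i t k"
proof -
  define E where "E = [int beta * (2 * int t), - int beta, - (int beta * int t ^ 2),
      int i + 1, (int i + 1) ^ 2, 1, int t]"
  have scale: "int beta * u \<le> int beta * (int n + 1) ^ 2" if "u \<le> (int n + 1) ^ 2" for u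
    using that by (simp add: mult_left_mono)
  have t_le: "int t \<le> int n + 1" and i_le: "int i + 1 \<le> int n + 1"
    and n_le: "int n + 1 \<le> (int n + 1) ^ 2"
    using assms by (simp_all add: power2_eq_square)
  have "(int n + 1) ^ 2 = int n * int n + 2 * int n + 1" by (simp add: power2_eq_square algebra_simps)
  then have "2 * int t \<le> (int n + 1) ^ 2" using assms mult_nonneg_nonneg[of "int n" "int n"] by linarith
  moreover have "int t ^ 2 \<le> (int n + 1) ^ 2" "(int i + 1) ^ 2 \<le> (int n + 1) ^ 2"
    using t_le i_le by (simp_all add: power_mono)
  moreover have "int i + 1 \<le> (int n + 1) ^ 2" "int t \<le> (int n + 1) ^ 2" "1 \<le> (int n + 1) ^ 2"
    using t_le i_le n_le by simp_all
  ultimately have bound: "\<forall>v\<in>set E. \<bar>v\<bar> \<le> int beta * (int n + 1) ^ 2"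
    using scale[of 1] unfolding E_def by (simp add: abs_mult scale le_scale)
  have "rd (of_int (E ! k)) = of_int (E ! k)" if "k < 7"
  proof (rule rd_of_int)
    have "E ! k \<in> set E" using that by (intro nth_mem) (simp add: E_def)
    then show "\<bar>E ! k\<bar> \<le> int beta * (int n + 1) ^ 2" using bound by simp
  qed
  then show ?thesis unfolding tok_emb_def E_def[symmetric] by (simp add: rd_0)
qed

lemma rvec_tok_emb:
  assumes "i \<le> n" "t \<le> n"
  shows "rvec rd 7 (tok_emb i t) = tok_emb i t"
proof
  fix k
  show "rvec rd 7 (tok_emb i t) k = tok_emb i t k"
  proof (cases "k < 7")
    case True
    then show ?thesis using rd_tok_emb[OF assms, of k] by (simp add: rvec_def)
  qed (simp add: rvec_def tok_emb_def)
qed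

lemma rd_score:
  assumes "x \<le> n" "j \<le> n" "t \<le> n"
  shows "rd (\<Sum>a<7. mv rd 7 WQ (tok_emb n x) a * mv rd 7 WK (tok_emb j t) a) = score x j"
proof -
  have q: "mv rd 7 WQ (tok_emb n x) a = (if a < 3 then tok_emb n x a else 0)" for a
    using assms by (simp add: WQ_def mv_sel_mat rd_0 rd_tok_emb)
  have k: "mv rd 7 WK (tok_emb j t) a = (if a < 3 then tok_emb j t (a + 3) else 0)" for a
    using assms by (simp add: WK_def mv_sel_mat rd_0 rd_tok_emb)
  have "(\<Sum>a<7. mv rd 7 WQ (tok_emb n x) a * mv rd 7 WK (tok_emb j t) a)
      = of_int (- int beta * (int x - int j - 1) ^ 2)"
    unfolding q k by (simp add: eval_nat_numeral tok_emb_def power2_eq_square algebra_simps)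
  moreover have "rd (of_int (- int beta * (int x - int j - 1) ^ 2)) = of_int (- int beta * (int x - int j - 1) ^ 2)"
  proof (rule rd_of_int)
    have "(int x - int j - 1) ^ 2 \<le> (int n + 1) ^ 2" using assms by (intro power2_mono) auto
    then show "\<bar>- int beta * (int x - int j - 1) ^ 2\<bar> \<le> int beta * (int n + 1) ^ 2"
      by (simp add: abs_mult mult_left_mono)
  qed
  ultimately show ?thesis by (simp add: score_def)
qed

lemma rd_softmax_score:
  assumes x: "x \<in> {1..n}" and "j \<le> n"
  shows "rd (exp (score x j) / (\<Sum>i\<le>n. exp (score x i))) = (if j = x - 1 then 1 else 0)"
proof -
  define Z where "Z = (\<Sum>i\<le>n. exp (score x i))"
  have peak: "score x (x - 1) = 0" using x by (simp add: score_def of_nat_diff)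
  have off_peak: "score x i \<le> - real beta" if "i \<in> {..n}" "i \<noteq> x - 1" for i
  proof -
    have "int x - int i - 1 \<noteq> 0" using that(2) x by auto
    then have "1 \<le> (int x - int i - 1) ^ 2" by (auto simp: power2_ge_1_iff)
    then have "int beta \<le> int beta * (int x - int i - 1) ^ 2"
      using mult_left_mono[of 1 _ "int beta"] by simp
    then have "real_of_int (int beta) \<le> real_of_int (int beta * (int x - int i - 1) ^ 2)"
      by (simp only: of_int_le_iff)
    then show ?thesis by (simp add: score_def)
  qed
  have "x - 1 \<in> {..n}" using x by auto
  note concentrates = softmax_concentrates[where s="score x",
      OF finite_atMost this peak off_peak card_exp_neg_beta_lt, folded Z_def]
  show ?thesis
  proof (cases "j = x - 1")
    case True
    have "\<bar>1::int\<bar> \<le> int beta * (int n + 1) ^ 2" by (intro le_scale) (simp add: one_le_power)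
    moreover have "\<bar>exp (score x j) / Z - of_int 1\<bar> < 1 / 2 ^ (frac_bits + 1)"
      using concentrates(1) True by simp
    ultimately have "rd (exp (score x j) / Z) = of_int 1" by (rule rd_eq_of_int)
    then show ?thesis using True by (simp add: Z_def)
  next
    case False
    have "0 < Z" unfolding Z_def by (intro sum_pos) auto
    then have "\<bar>exp (score x j) / Z - of_int 0\<bar> < 1 / 2 ^ (frac_bits + 1)"
      using concentrates(2)[of j] assms(2) False by simp
    then have "rd (exp (score x j) / Z) = of_int 0" by (intro rd_eq_of_int) simp_all
    then show ?thesis using False by (simp add: Z_def)
  qed
qed

lemma sm_head_eva:
  assumes f: "is_fun_n n f" and x: "x \<in> {1..n}"
  shows "sm_head rd 7 WQ WK WV (embed rd 7 tok_emb (eva_input n f x)) n 0 = real (f x)"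
proof -
  define X where "X = embed rd 7 tok_emb (eva_input n f x)"
  define tok where "tok j = eva_input n f x ! j" for j
  define Z where "Z = (\<Sum>j\<le>n. exp (score x j))"
  have tok: "tok j = (if j < n then f (j + 1) else x)" if "j \<le> n" for j
    using that unfolding tok_def eva_input_def by (auto simp: nth_append simp del: upt_Suc)
  have tok_le: "tok j \<le> n" if "j \<le> n" for j
    using tok[OF that] f x that by (auto simp: is_fun_n_def)
  have X: "X j = tok_emb j (tok j)" if "j \<le> n" for j
    using rvec_tok_emb[OF that tok_le[OF that]] by (simp add: X_def embed_def tok_def)
  have rd_scores: "rd (\<Sum>a<7. mv rd 7 WQ (X n) a * mv rd 7 WK (X j) a) = score x j" if "j \<le> n" for j
    using rd_score[of x j "tok j"] x tok_le[OF that] that by (simp add: X tok)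
  have "(\<Sum>j\<le>n. rd (exp (score x j) / Z) * mv rd 7 WV (X j) 0)
      = (\<Sum>j\<le>n. if j = x - 1 then real (tok j) else 0)"
  proof (rule sum.cong)
    fix j assume "j \<in> {..n}"
    then have j: "j \<le> n" by simp
    have "mv rd 7 WV (X j) 0 = real (tok j)"
      using rd_tok_emb[OF j tok_le[OF j], of 6] by (simp add: X[OF j] WV_def mv_sel_mat tok_emb_def)
    then show "rd (exp (score x j) / Z) * mv rd 7 WV (X j) 0 = (if j = x - 1 then real (tok j) else 0)"
      using rd_softmax_score[OF x j] by (simp add: Z_def)
  qed simp
  also have "\<dots> = real (tok (x - 1))" using x by auto
  also have "\<dots> = real (f x)" using x tok[of "x - 1"] by auto
  finally have main: "(\<Sum>j\<le>n. rd (exp (score x j) / Z) * mv rd 7 WV (X j) 0) = real (f x)" .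
  have Z_eq: "(\<Sum>j\<le>n. exp (rd (\<Sum>a<7. mv rd 7 WQ (X n) a * mv rd 7 WK (X j) a))) = Z"
    unfolding Z_def by (rule sum.cong) (simp_all add: rd_scores)
  have "(\<Sum>j\<le>n. rd (exp (rd (\<Sum>a<7. mv rd 7 WQ (X n) a * mv rd 7 WK (X j) a)) / Z) * mv rd 7 WV (X j) 0)
      = real (f x)"
    unfolding main[symmetric] by (rule sum.cong) (simp_all add: rd_scores)
  moreover have "f x \<le> n" using f x by (auto simp: is_fun_n_def)
  ultimately show ?thesis
    unfolding sm_head_def Let_def X_def[symmetric] Z_eq by (simp add: rvec_def rd_of_nat)
qed

lemma sm_model_solves_eva:
  "solves_eva n (sm_model rd 7 1 1 tok_emb (\<lambda>l h. WQ) (\<lambda>l h. WK) (\<lambda>l h. WV) (\<lambda>l v. v) (\<lambda>v. nat \<lfloor>v 0\<rfloor>))"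
  unfolding solves_eva_def
proof (intro allI impI ballI)
  fix f x assume f: "is_fun_n n f" and x: "x \<in> {1..n}"
  have "f x \<le> n" using f x by (auto simp: is_fun_n_def)
  moreover have "sm_model rd 7 1 1 tok_emb (\<lambda>l h. WQ) (\<lambda>l h. WK) (\<lambda>l h. WV) (\<lambda>l v. v) (\<lambda>v. nat \<lfloor>v 0\<rfloor>)
      (eva_input n f x) = nat \<lfloor>rd (sm_head rd 7 WQ WK WV (embed rd 7 tok_emb (eva_input n f x)) n 0)\<rfloor>"
    by (simp add: sm_model_def next_tok_def tlayer_def rvec_def eva_input_simps)
  ultimately show "sm_model rd 7 1 1 tok_emb (\<lambda>l h. WQ) (\<lambda>l h. WK) (\<lambda>l h. WV) (\<lambda>l v. v)
      (\<lambda>v. nat \<lfloor>v 0\<rfloor>) (eva_input n f x) = f x"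
    using sm_head_eva[OF f x] by (simp add: rd_of_nat)
qed

lemma sm_weights_in:
  "weights_in (fx_set (2 * frac_bits)) 1 1 7 (\<lambda>l h. WQ)"
  "weights_in (fx_set (2 * frac_bits)) 1 1 7 (\<lambda>l h. WK)"
  "weights_in (fx_set (2 * frac_bits)) 1 1 7 (\<lambda>l h. WV)"
proof -
  have "0 \<in> fx_set (2 * frac_bits)" "1 \<in> fx_set (2 * frac_bits)"
    using rd_0 rd_1 unfolding fx_set_def rd_def by (metis rangeI)+
  then show "weights_in (fx_set (2 * frac_bits)) 1 1 7 (\<lambda>l h. WQ)"
    "weights_in (fx_set (2 * frac_bits)) 1 1 7 (\<lambda>l h. WK)"
    "weights_in (fx_set (2 * frac_bits)) 1 1 7 (\<lambda>l h. WV)"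
    unfolding WQ_def WK_def WV_def by (simp_all add: sel_mat_weights_in)
qed

end

lemma sm_solves_eva_polylog:
  "\<exists>(c::real) (k::nat). \<forall>(n::nat)\<ge>2. \<exists>(H::nat) (d::nat) (p::nat) emb Q K V mlp dec.
     weights_in (fx_set p) 1 H d Q \<and> weights_in (fx_set p) 1 H d K \<and> weights_in (fx_set p) 1 H d V \<and>
     real (H * d * p) \<le> c * (log 2 (real n)) ^ k \<and>
     solves_eva n (sm_model (fx_rnd p) d 1 H emb Q K V mlp dec)"
proof (rule exI[of _ 224], rule exI[of _ 1], intro allI impI)
  fix n :: nat assume n: "2 \<le> n"
  define s where "s = floor_log n + 1"
  interpret eva_softmax_construction n s
    using floor_log_exp2_gt[of n] by unfold_locales (simp add: s_def)
  have log_ge_1: "1 \<le> log 2 (real n)" using n by simp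
  have "real (floor_log n) \<le> log 2 (real n)"
    using n log_ge_1 by (simp add: floor_log_altdef)
  moreover have "frac_bits = 4 * floor_log n + 12" unfolding frac_bits_def by (simp add: s_def)
  ultimately have "real (1 * 7 * (2 * frac_bits)) \<le> 224 * log 2 (real n) ^ 1"
    using log_ge_1 by simp
  then show "\<exists>(H::nat) (d::nat) (p::nat) emb Q K V mlp dec.
     weights_in (fx_set p) 1 H d Q \<and> weights_in (fx_set p) 1 H d K \<and> weights_in (fx_set p) 1 H d V \<and>
     real (H * d * p) \<le> 224 * (log 2 (real n)) ^ 1 \<and>
     solves_eva n (sm_model (fx_rnd p) d 1 H emb Q K V mlp dec)"
    using sm_weights_in sm_model_solves_eva unfolding rd_def by blast
qed

lemma solves_eva_cot_if_solves_eva: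
  assumes "solves_eva n nt"
  shows "solves_eva_cot n nt 1 hd"
  using assms by (simp add: solves_eva_cot_def solves_eva_def Let_def eva_input_simps)

theorem theoremA3:
  shows "(\<forall>(n::nat) (L::nat) (H::nat) (d::nat) (p::nat) P rnd emb Q K V phi mlp dec.
            prec_scheme p P rnd \<and> weights_in P L H d Q \<and> weights_in P L H d K \<and> weights_in P L H d V \<and>
            real (L * H * d * (d + 1) * p) < real n * log 2 (real n)
            \<longrightarrow> \<not> solves_eva n (lin_model rnd d L H emb Q K V phi mlp dec))
       \<and> (\<exists>(c::real) (k::nat). \<forall>(n::nat)\<ge>2. \<exists>(H::nat) (d::nat) (p::nat) emb Q K V mlp dec.
            weights_in (fx_set p) 1 H d Q \<and> weights_in (fx_set p) 1 H d K \<and> weights_in (fx_set p) 1 H d V \<and>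
            real (H * d * p) \<le> c * (log 2 (real n)) ^ k \<and>
            solves_eva n (sm_model (fx_rnd p) d 1 H emb Q K V mlp dec))
       \<and> (\<forall>(n::nat) (L::nat) (H::nat) (d::nat) (p::nat) P rnd emb Q K V phi mlp dec (T::nat) ans.
            prec_scheme p P rnd \<and> weights_in P L H d Q \<and> weights_in P L H d K \<and> weights_in P L H d V \<and>
            real (L * H * d * (d + 1) * p) < real n * log 2 (real n)
            \<longrightarrow> \<not> solves_eva_cot n (lin_model rnd d L H emb Q K V phi mlp dec) T ans)"
  using lin_attn_model.not_solves_eva_cot solves_eva_cot_if_solves_eva sm_solves_eva_polylog by blast

end
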